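(* Let $T>0$ and let $\pi=(\pi^n)_{n\geq 1}$ be a sequence of partitions $\pi^n=(0=t^n_0<t^n_1<\cdots<t^n_{N(\pi^n)}=T)$ of $[0,T]$ with vanishing mesh, i.e. $|\pi^n|\to 0$. Then: (i) $\pi$ is balanced if and only if $\liminf_{n\to\infty} N(\pi^n)\,\underline{\pi^n}>0$ and $\limsup_{n\to\infty} N(\pi^n)\,|\pi^n|<\infty$. (ii) For $0\le t_1\le t_2\le T$ let $N(\pi^n,t_1,t_2)$ denote the number of partition points of $\pi^n$ in $[t_1,t_2]$. If $\pi$ is balanced, then for any $h\in(0,T]$, $$\limsup_{n\to\infty}\frac{\sup_{t\in[0,T-h]}N(\pi^n,t,t+h)}{\inf_{t\in[0,T-h]}N(\pi^n,t,t+h)}<\infty.$$ (iii) If $\pi$ is balanced, then $$\limsup_n\frac{N(\pi^{n+1})}{N(\pi^n)}<\infty\iff\limsup_n\frac{|\pi^n|}{|\pi^{n+1}|}<\infty\iff\limsup_n\frac{\underline{\pi^n}}{\underline{\pi^{n+1}}}<\infty.$$ (iv) If $g\in C^1([0,T],\mathbb{R})$ is strictly increasing with $\inf_{[0,T]} g'>0$, then for any balanced partition sequence $(\pi^n)_{n\ge1}$ of $[0,T]$, the sequence $(g(\pi^n))_{n\geq1}$, where $g(\pi^n)=(g(t^n_0)<g(t^n_1)<\cdots<g(t^n_{N(\pi^n)}))$, is a balanced partition sequence of $g([0,T])=[g(0),g(T)]$.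
   Context: For a finite partition $\pi^n=(0=t^n_0<t^n_1<\cdots<t^n_{N(\pi^n)}=T)$ of $[0,T]$, $N(\pi^n)$ is the number of intervals, $|\pi^n|=\sup_{i}|t^n_{i}-t^n_{i-1}|$ is the largest interval length (mesh) and $\underline{\pi^n}=\inf_i|t^n_i-t^n_{i-1}|$ the smallest interval length. A sequence of partitions $(\pi^n)_{n\geq1}$ of an interval is called balanced if there exists $c>0$ such that $|\pi^n|/\underline{\pi^n}\le c$ for all $n\ge1$. *)

theory Defs
  imports "HOL-Analysis.Analysis"
begin

text \<open>A finite partition is represented by its number of intervals N and its points
  t 0, ..., t N (a function nat => real, only values at indices <= N matter).\<close>

definition is_partition :: "real \<Rightarrow> real \<Rightarrow> (nat \<Rightarrow> real) \<Rightarrow> nat \<Rightarrow> bool" where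
  "is_partition a b t N \<longleftrightarrow> t 0 = a \<and> t N = b \<and> (\<forall>i<N. t i < t (Suc i))"

definition partition_seq :: "real \<Rightarrow> real \<Rightarrow> (nat \<Rightarrow> nat \<Rightarrow> real) \<Rightarrow> (nat \<Rightarrow> nat) \<Rightarrow> bool" where
  "partition_seq a b t N \<longleftrightarrow> (\<forall>n\<ge>1. is_partition a b (t n) (N n))"

definition mesh :: "(nat \<Rightarrow> real) \<Rightarrow> nat \<Rightarrow> real" where
  "mesh t N = Max ((\<lambda>i. t (Suc i) - t i) ` {..<N})"

definition minmesh :: "(nat \<Rightarrow> real) \<Rightarrow> nat \<Rightarrow> real" where
  "minmesh t N = Min ((\<lambda>i. t (Suc i) - t i) ` {..<N})"

definition balanced :: "(nat \<Rightarrow> nat \<Rightarrow> real) \<Rightarrow> (nat \<Rightarrow> nat) \<Rightarrow> bool" where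
  "balanced t N \<longleftrightarrow> (\<exists>c>0. \<forall>n\<ge>1. mesh (t n) (N n) / minmesh (t n) (N n) \<le> c)"

definition npoints :: "(nat \<Rightarrow> real) \<Rightarrow> nat \<Rightarrow> real \<Rightarrow> real \<Rightarrow> nat" where
  "npoints t N s1 s2 = card {i. i \<le> N \<and> t i \<in> {s1..s2}}"

end

theory Submission
  imports Defs
begin

text \<open>The gaps of a partition of \<open>[a, b]\<close> into \<open>N\<close> intervals sum to \<open>b - a\<close>, so
  \<open>N \<cdot> minmesh \<le> b - a \<le> N \<cdot> mesh\<close>. Hence \<open>mesh \<le> c \<cdot> minmesh\<close> for all \<open>n\<close> holds iff
  \<open>N \<cdot> mesh\<close> and \<open>N \<cdot> minmesh\<close> are both comparable to \<open>b - a\<close>, which is (i); then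
  \<open>mesh\<close>, \<open>minmesh\<close> and \<open>1 / N\<close> are comparable uniformly in \<open>n\<close>, which gives (iii).
  For (ii), a window of length \<open>h\<close> contains at most \<open>h / minmesh + 1\<close> and at least
  \<open>h / mesh - 1\<close> partition points, and once \<open>mesh \<le> h / 2\<close> the quotient of these bounds is at
  most \<open>2 c + 1\<close>. For (iv), by the mean value theorem \<open>g\<close> stretches every gap by a factor
  between \<open>inf g' > 0\<close> and \<open>max g'\<close>.\<close>

lemma Limsup_ereal_less_PInfty_iff:
  "Limsup F (\<lambda>x. ereal (f x)) < \<infinity> \<longleftrightarrow> (\<exists>B. \<forall>\<^sub>F x in F. f x \<le> B)"
proof
  assume "Limsup F (\<lambda>x. ereal (f x)) < \<infinity>"
  then obtain B where "Limsup F (\<lambda>x. ereal (f x)) < ereal B"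
    by (metis less_PInf_Ex_of_nat less_ereal.simps(4) less_irrefl)
  from Limsup_lessD[OF this] have "\<forall>\<^sub>F x in F. f x \<le> B"
    by (rule eventually_mono) simp
  then show "\<exists>B. \<forall>\<^sub>F x in F. f x \<le> B" ..
next
  assume "\<exists>B. \<forall>\<^sub>F x in F. f x \<le> B"
  then obtain B where "\<forall>\<^sub>F x in F. f x \<le> B" by blast
  then have "\<forall>\<^sub>F x in F. ereal (f x) \<le> ereal B" by simp
  then have "Limsup F (\<lambda>x. ereal (f x)) \<le> ereal B" by (rule Limsup_bounded)
  also have "ereal B < \<infinity>" by simp
  finally show "Limsup F (\<lambda>x. ereal (f x)) < \<infinity>" .
qed

lemma Liminf_ereal_gt_0_iff:
  "0 < Liminf F (\<lambda>x. ereal (f x)) \<longleftrightarrow> (\<exists>d>0. \<forall>\<^sub>F x in F. d \<le> f x)"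
proof
  assume "0 < Liminf F (\<lambda>x. ereal (f x))"
  then obtain r where r: "0 < r" "r < Liminf F (\<lambda>x. ereal (f x))"
    using ereal_dense2 by blast
  then obtain d where d: "r = ereal d" by (cases r) auto
  from less_LiminfD[OF r(2)] have "\<forall>\<^sub>F x in F. d \<le> f x"
    by (rule eventually_mono) (simp add: d)
  with r(1) d show "\<exists>d>0. \<forall>\<^sub>F x in F. d \<le> f x" by auto
next
  assume "\<exists>d>0. \<forall>\<^sub>F x in F. d \<le> f x"
  then obtain d where "0 < d" "\<forall>\<^sub>F x in F. d \<le> f x" by blast
  have "0 < ereal d" using \<open>0 < d\<close> by simp
  also have "ereal d \<le> Liminf F (\<lambda>x. ereal (f x))"
    by (rule Liminf_bounded) (simp add: \<open>\<forall>\<^sub>F x in F. d \<le> f x\<close>)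
  finally show "0 < Liminf F (\<lambda>x. ereal (f x))" .
qed

lemma Limsup_ereal_less_PInfty_if_dominated:
  assumes "\<forall>\<^sub>F x in F. f x \<le> c * g x" "0 \<le> c" "Limsup F (\<lambda>x. ereal (g x)) < \<infinity>"
  shows "Limsup F (\<lambda>x. ereal (f x)) < \<infinity>"
proof -
  obtain B where "\<forall>\<^sub>F x in F. g x \<le> B"
    using assms(3) unfolding Limsup_ereal_less_PInfty_iff by blast
  with assms(1) have "\<forall>\<^sub>F x in F. f x \<le> c * B"
  proof eventually_elim
    case (elim x)
    have "c * g x \<le> c * B" using elim(2) assms(2) by (rule mult_left_mono)
    with elim(1) show ?case by linarith
  qed
  then show ?thesis unfolding Limsup_ereal_less_PInfty_iff by blast
qed

lemma Limsup_ereal_less_PInfty_iff_if_comparable: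
  assumes "\<forall>\<^sub>F x in F. f x \<le> c * g x \<and> g x \<le> c * f x" "0 \<le> c"
  shows "Limsup F (\<lambda>x. ereal (f x)) < \<infinity> \<longleftrightarrow> Limsup F (\<lambda>x. ereal (g x)) < \<infinity>"
proof -
  have "\<forall>\<^sub>F x in F. f x \<le> c * g x" "\<forall>\<^sub>F x in F. g x \<le> c * f x"
    using assms(1) by (simp_all add: eventually_conj_iff)
  then show ?thesis using Limsup_ereal_less_PInfty_if_dominated assms(2) by metis
qed

lemma eventually_le_imp_bounded_above:
  assumes "\<forall>\<^sub>F n in sequentially. f n \<le> (B :: real)"
  shows "\<exists>C>0. \<forall>n. f n \<le> C"
proof -
  obtain n0 where n0: "\<And>n. n0 \<le> n \<Longrightarrow> f n \<le> B"
    using assms unfolding eventually_sequentially by blast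
  define C where "C = max 1 (max B (Max (f ` {..<n0})))"
  have "f n \<le> C" for n
  proof (cases "n < n0")
    case True
    then have "f n \<le> Max (f ` {..<n0})" by (intro Max_ge) auto
    then show ?thesis unfolding C_def by linarith
  next
    case False
    then show ?thesis using n0[of n] unfolding C_def by linarith
  qed
  moreover have "0 < C" unfolding C_def by simp
  ultimately show ?thesis by blast
qed

lemma is_partition_num_intervals_pos:
  assumes "is_partition a b t N" "a < b"
  shows "0 < N"
  using assms unfolding is_partition_def by (cases N) auto

lemma is_partition_sum_gaps:
  assumes "is_partition a b t N"
  shows "(\<Sum>i<N. t (Suc i) - t i) = b - a"
  using assms sum_lessThan_telescope[of t N] unfolding is_partition_def by simp

lemma gap_le_mesh: "i < N \<Longrightarrow> t (Suc i) - t i \<le> mesh t N"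
  unfolding mesh_def by (rule Max_ge) auto

lemma minmesh_le_gap: "i < N \<Longrightarrow> minmesh t N \<le> t (Suc i) - t i"
  unfolding minmesh_def by (rule Min_le) auto

lemma mesh_attained:
  assumes "0 < N"
  shows "\<exists>i<N. mesh t N = t (Suc i) - t i"
proof -
  have "mesh t N \<in> (\<lambda>i. t (Suc i) - t i) ` {..<N}"
    unfolding mesh_def using assms by (intro Max_in) auto
  then show ?thesis by auto
qed

lemma minmesh_attained:
  assumes "0 < N"
  shows "\<exists>i<N. minmesh t N = t (Suc i) - t i"
proof -
  have "minmesh t N \<in> (\<lambda>i. t (Suc i) - t i) ` {..<N}"
    unfolding minmesh_def using assms by (intro Min_in) auto
  then show ?thesis by auto
qed

lemma minmesh_le_mesh: "0 < N \<Longrightarrow> minmesh t N \<le> mesh t N"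
  using minmesh_le_gap[of 0 N t] gap_le_mesh[of 0 N t] by simp

lemma minmesh_pos:
  assumes "is_partition a b t N" "0 < N"
  shows "0 < minmesh t N"
  using minmesh_attained[OF assms(2), of t] assms(1) unfolding is_partition_def by force

lemma mesh_pos: "is_partition a b t N \<Longrightarrow> 0 < N \<Longrightarrow> 0 < mesh t N"
  using minmesh_pos minmesh_le_mesh by (metis less_le_trans)

lemma num_intervals_mult_minmesh_le:
  assumes "is_partition a b t N"
  shows "real N * minmesh t N \<le> b - a"
proof -
  have "(\<Sum>i<N. minmesh t N) \<le> (\<Sum>i<N. t (Suc i) - t i)"
    by (intro sum_mono minmesh_le_gap) simp
  then show ?thesis using is_partition_sum_gaps[OF assms] by simp
qed

lemma length_le_num_intervals_mult_mesh:
  assumes "is_partition a b t N"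
  shows "b - a \<le> real N * mesh t N"
proof -
  have "(\<Sum>i<N. t (Suc i) - t i) \<le> (\<Sum>i<N. mesh t N)"
    by (intro sum_mono gap_le_mesh) simp
  then show ?thesis using is_partition_sum_gaps[OF assms] by simp
qed

lemma minmesh_mult_le_diff:
  assumes "i \<le> j" "j \<le> N"
  shows "real (j - i) * minmesh t N \<le> t j - t i"
  using assms
proof (induction j rule: dec_induct)
  case base
  then show ?case by simp
next
  case (step j)
  then have "minmesh t N \<le> t (Suc j) - t j" by (intro minmesh_le_gap) simp
  with step show ?case by (simp add: Suc_diff_le algebra_simps)
qed

lemma is_partition_strict_mono:
  assumes "is_partition a b t N" "i < j" "j \<le> N"
  shows "t i < t j"
  using assms(2,3)
proof (induction j)
  case 0
  then show ?case by simp
next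
  case (Suc j)
  have "t j < t (Suc j)" using assms(1) Suc.prems unfolding is_partition_def by simp
  with Suc show ?case by (cases "i = j") auto
qed

lemma is_partition_mono:
  assumes "is_partition a b t N" "i \<le> j" "j \<le> N"
  shows "t i \<le> t j"
  using is_partition_strict_mono[OF assms(1), of i j] assms(2,3) by (cases "i = j") auto

lemma is_partition_range:
  assumes "is_partition a b t N" "i \<le> N"
  shows "t i \<in> {a..b}"
  using is_partition_mono[OF assms(1), of 0 i] is_partition_mono[OF assms(1), of i N] assms
  unfolding is_partition_def by auto

lemma is_partition_cell:
  assumes "is_partition a b t N" "a \<le> x" "x < b"
  shows "\<exists>i<N. t i \<le> x \<and> x < t (Suc i)"
proof (rule ccontr)
  assume no_cell: "\<not> ?thesis"
  have "t i \<le> x" if "i \<le> N" for i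
    using that
  proof (induction i)
    case 0
    then show ?case using assms unfolding is_partition_def by simp
  next
    case (Suc i)
    then show ?case using no_cell by auto
  qed
  then show False using assms unfolding is_partition_def by fastforce
qed

lemma is_partition_point_in_window:
  assumes "is_partition a b t N" "0 < N" "a \<le> x" "x + mesh t N \<le> b"
  shows "\<exists>i\<le>N. x < t i \<and> t i \<le> x + mesh t N"
proof -
  have "x < b" using mesh_pos[OF assms(1,2)] assms(4) by simp
  then obtain i where "i < N" "t i \<le> x" "x < t (Suc i)"
    using is_partition_cell[OF assms(1,3)] by blast
  moreover have "t (Suc i) \<le> t i + mesh t N" using gap_le_mesh[OF \<open>i < N\<close>, of t] by simp
  ultimately show ?thesis by (intro exI[of _ "Suc i"]) auto
qed

lemma npoints_le:
  assumes "is_partition a b t N" "0 < N" "0 \<le> h"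
  shows "real (npoints t N s (s + h)) \<le> h / minmesh t N + 1"
proof -
  define m where "m = minmesh t N"
  define S where "S = {i. i \<le> N \<and> t i \<in> {s..s + h}}"
  have m: "0 < m" unfolding m_def using minmesh_pos[OF assms(1,2)] .
  show ?thesis
  proof (cases "S = {}")
    case True
    then show ?thesis using assms(3) m unfolding npoints_def S_def[symmetric] m_def by simp
  next
    case False
    define i0 where "i0 = Min S"
    define K where "K = nat \<lfloor>h / m\<rfloor>"
    have "finite S" unfolding S_def by simp
    then have i0: "i0 \<in> S" "\<And>j. j \<in> S \<Longrightarrow> i0 \<le> j"
      using False unfolding i0_def by auto
    have "S \<subseteq> {i0..i0 + K}"
    proof
      fix j assume j: "j \<in> S"
      have "real (j - i0) * m \<le> t j - t i0"
        unfolding m_def using j i0 unfolding S_def by (intro minmesh_mult_le_diff) auto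
      also have "\<dots> \<le> h" using j i0(1) unfolding S_def by auto
      finally have "j - i0 \<le> K"
        unfolding K_def using m by (intro le_nat_floor) (simp add: field_simps)
      then show "j \<in> {i0..i0 + K}" using i0(2)[OF j] by simp
    qed
    then have "card S \<le> K + 1" using card_mono[of "{i0..i0 + K}" S] by simp
    moreover have "real K \<le> h / m" unfolding K_def using assms(3) m by simp
    ultimately show ?thesis unfolding npoints_def S_def[symmetric] m_def by linarith
  qed
qed

lemma npoints_mono: "s' \<le> s \<Longrightarrow> u \<le> u' \<Longrightarrow> npoints t N s u \<le> npoints t N s' u'"
  unfolding npoints_def by (intro card_mono) auto

lemma npoints_ge_num_windows:
  assumes "is_partition a b t N" "0 < N" "a \<le> s" "s + real K * mesh t N \<le> b"
  shows "K \<le> npoints t N s (s + real K * mesh t N)"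
proof -
  define M where "M = mesh t N"
  define S where "S = {i. i \<le> N \<and> t i \<in> {s..s + real K * M}}"
  have M: "0 < M" unfolding M_def using mesh_pos[OF assms(1,2)] .
  have "\<exists>i. i \<in> S \<and> s + real k * M < t i \<and> t i \<le> s + real k * M + M" if "k < K" for k
  proof -
    have "real (Suc k) * M \<le> real K * M" using that M by (intro mult_right_mono) auto
    then have window_le: "s + real k * M + M \<le> s + real K * M" by (simp add: algebra_simps)
    have kM: "0 \<le> real k * M" using M by simp
    then obtain i where i: "i \<le> N" "s + real k * M < t i" "t i \<le> s + real k * M + M"
      using is_partition_point_in_window[OF assms(1,2), of "s + real k * M"] assms(3,4) window_le
      unfolding M_def by auto
    moreover from i(2) kM have "s \<le> t i" by linarith
    ultimately show ?thesis using window_le unfolding S_def by (intro exI[of _ i]) auto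
  qed
  then obtain f where f: "\<And>k. k < K \<Longrightarrow>
      f k \<in> S \<and> s + real k * M < t (f k) \<and> t (f k) \<le> s + real k * M + M"
    by metis
  have "inj_on f {..<K}"
  proof (rule inj_onI)
    fix k l assume "k \<in> {..<K}" "l \<in> {..<K}" "f k = f l"
    then have "real k * M < (real l + 1) * M" "real l * M < (real k + 1) * M"
      using f[of k] f[of l] by (auto simp: algebra_simps)
    then have "real k < real l + 1" "real l < real k + 1"
      using mult_less_cancel_right_pos[OF M] by blast+
    then show "k = l" by linarith
  qed
  moreover have "finite S" unfolding S_def by simp
  ultimately have "K \<le> card S" using card_inj_on_le[of f "{..<K}" S] f by auto
  then show ?thesis unfolding npoints_def S_def M_def .
qed

lemma npoints_ge:
  assumes "is_partition a b t N" "0 < N" "a \<le> s" "s + h \<le> b" "0 \<le> h"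
  shows "h / mesh t N - 1 \<le> real (npoints t N s (s + h))"
proof -
  define K where "K = nat \<lfloor>h / mesh t N\<rfloor>"
  have M: "0 < mesh t N" using mesh_pos[OF assms(1,2)] .
  have "real K \<le> h / mesh t N" unfolding K_def using assms(5) M by simp
  then have KM: "real K * mesh t N \<le> h" using M by (simp add: field_simps)
  have "K \<le> npoints t N s (s + real K * mesh t N)"
    using npoints_ge_num_windows[OF assms(1-3)] KM assms(4) by simp
  also have "\<dots> \<le> npoints t N s (s + h)" using KM by (intro npoints_mono) simp_all
  finally have "K \<le> npoints t N s (s + h)" .
  moreover have "h / mesh t N - 1 \<le> real K" unfolding K_def by linarith
  ultimately show ?thesis by linarith
qed

lemma npoints_ratio_le:
  assumes "is_partition a b t N" "0 < N" "0 < h" "h \<le> b - a"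
    and "mesh t N \<le> c * minmesh t N" "mesh t N \<le> h / 2"
  shows "(SUP s\<in>{a..b-h}. real (npoints t N s (s + h)))
           / (INF s\<in>{a..b-h}. real (npoints t N s (s + h))) \<le> 2 * c + 1"
proof -
  define m where "m = minmesh t N"
  define q where "q = h / mesh t N"
  have m: "0 < m" unfolding m_def using minmesh_pos[OF assms(1,2)] .
  have M: "0 < mesh t N" using mesh_pos[OF assms(1,2)] .
  have q: "2 \<le> q" unfolding q_def using assms(6) M by (simp add: le_divide_eq)
  have nonempty: "{a..b-h} \<noteq> {}" using assms(4) by simp
  have "(SUP s\<in>{a..b-h}. real (npoints t N s (s + h))) \<le> h / m + 1"
    unfolding m_def using npoints_le[OF assms(1,2)] assms(3)
    by (intro cSUP_least[OF nonempty]) simp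
  moreover have "q / 2 \<le> (INF s\<in>{a..b-h}. real (npoints t N s (s + h)))"
  proof (rule cINF_greatest[OF nonempty])
    fix s assume "s \<in> {a..b-h}"
    then have "q - 1 \<le> real (npoints t N s (s + h))"
      unfolding q_def using npoints_ge[OF assms(1,2)] assms(3) by simp
    then show "q / 2 \<le> real (npoints t N s (s + h))" using q by linarith
  qed
  ultimately have "(SUP s\<in>{a..b-h}. real (npoints t N s (s + h)))
      / (INF s\<in>{a..b-h}. real (npoints t N s (s + h))) \<le> (h / m + 1) / (q / 2)"
    using m q assms(3) by (intro frac_le) auto
  also have "\<dots> \<le> 2 * c + 1"
  proof -
    have "h * mesh t N \<le> h * (c * m)" using assms(3,5) unfolding m_def by simp
    then have "h / m \<le> c * q" unfolding q_def using m M by (simp add: field_simps)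
    moreover have "(2 * c + 1) * (q / 2) = c * q + q / 2" by (simp add: algebra_simps)
    ultimately have "h / m + 1 \<le> (2 * c + 1) * (q / 2)" using q by linarith
    then show ?thesis using q by (simp add: pos_divide_le_eq)
  qed
  finally show ?thesis .
qed

lemma partition_seqD: "partition_seq a b t N \<Longrightarrow> 1 \<le> n \<Longrightarrow> is_partition a b (t n) (N n)"
  unfolding partition_seq_def by blast

lemma balancedE:
  assumes "balanced t N" "partition_seq a b t N" "a < b"
  obtains c where "0 < c" "\<And>n. 1 \<le> n \<Longrightarrow> mesh (t n) (N n) \<le> c * minmesh (t n) (N n)"
proof -
  obtain c where c: "0 < c" "\<And>n. 1 \<le> n \<Longrightarrow> mesh (t n) (N n) / minmesh (t n) (N n) \<le> c"
    using assms(1) unfolding balanced_def by blast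
  have "mesh (t n) (N n) \<le> c * minmesh (t n) (N n)" if "1 \<le> n" for n
  proof -
    have "is_partition a b (t n) (N n)" using partition_seqD[OF assms(2) that] .
    then have "0 < minmesh (t n) (N n)"
      using minmesh_pos is_partition_num_intervals_pos assms(3) by blast
    then show ?thesis using c(2)[OF that] by (simp add: pos_divide_le_eq mult.commute)
  qed
  with c(1) show ?thesis by (rule that)
qed

lemma balanced_num_intervals_mult_mesh_bounds:
  assumes "balanced t N" "partition_seq a b t N" "a < b"
  obtains c where "0 < c"
    "\<And>n. 1 \<le> n \<Longrightarrow> b - a \<le> real (N n) * mesh (t n) (N n)"
    "\<And>n. 1 \<le> n \<Longrightarrow> real (N n) * mesh (t n) (N n) \<le> c * (b - a)"
    "\<And>n. 1 \<le> n \<Longrightarrow> (b - a) / c \<le> real (N n) * minmesh (t n) (N n)"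
    "\<And>n. 1 \<le> n \<Longrightarrow> real (N n) * minmesh (t n) (N n) \<le> b - a"
proof -
  obtain c where c: "0 < c" "\<And>n. 1 \<le> n \<Longrightarrow> mesh (t n) (N n) \<le> c * minmesh (t n) (N n)"
    using balancedE[OF assms] by blast
  have "b - a \<le> real (N n) * mesh (t n) (N n) \<and> real (N n) * mesh (t n) (N n) \<le> c * (b - a) \<and>
      (b - a) / c \<le> real (N n) * minmesh (t n) (N n) \<and> real (N n) * minmesh (t n) (N n) \<le> b - a"
    if "1 \<le> n" for n
  proof -
    have P: "is_partition a b (t n) (N n)" using partition_seqD[OF assms(2) that] .
    have upper: "b - a \<le> real (N n) * mesh (t n) (N n)"
      using length_le_num_intervals_mult_mesh[OF P] .
    have lower: "real (N n) * minmesh (t n) (N n) \<le> b - a"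
      using num_intervals_mult_minmesh_le[OF P] .
    have "real (N n) * mesh (t n) (N n) \<le> c * (real (N n) * minmesh (t n) (N n))"
      using mult_left_mono[OF c(2)[OF that], of "real (N n)"] by (simp add: mult_ac)
    moreover from this have "(b - a) / c \<le> real (N n) * minmesh (t n) (N n)"
      using upper c(1) by (simp add: divide_le_eq mult.commute)
    moreover have "c * (real (N n) * minmesh (t n) (N n)) \<le> c * (b - a)"
      using lower c(1) by simp
    ultimately show ?thesis using upper lower by linarith
  qed
  with c(1) show ?thesis by (intro that[of c]) auto
qed

lemma balanced_if_num_intervals_mult_mesh_bounded:
  assumes "partition_seq a b t N" "a < b" "0 < d"
    and "\<forall>\<^sub>F n in sequentially. d \<le> real (N n) * minmesh (t n) (N n)"
    and "\<forall>\<^sub>F n in sequentially. real (N n) * mesh (t n) (N n) \<le> B"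
  shows "balanced t N"
proof -
  have "\<forall>\<^sub>F n in sequentially. mesh (t n) (N n) / minmesh (t n) (N n) \<le> B / d"
    using assms(4,5) eventually_ge_at_top[of 1]
  proof eventually_elim
    case (elim n)
    have P: "is_partition a b (t n) (N n)" using partition_seqD[OF assms(1) elim(3)] .
    have "0 < N n" using is_partition_num_intervals_pos[OF P assms(2)] .
    then have "mesh (t n) (N n) / minmesh (t n) (N n)
        = (real (N n) * mesh (t n) (N n)) / (real (N n) * minmesh (t n) (N n))"
      by simp
    also have "\<dots> \<le> B / d"
      using elim(1,2) assms(2,3) length_le_num_intervals_mult_mesh[OF P] by (intro frac_le) auto
    finally show ?case .
  qed
  from eventually_le_imp_bounded_above[OF this]
  obtain C where "0 < C" "\<And>n. mesh (t n) (N n) / minmesh (t n) (N n) \<le> C" by blast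
  then show "balanced t N" unfolding balanced_def by blast
qed

lemma balanced_iff_num_intervals_mult_mesh_bounded:
  assumes "partition_seq a b t N" "a < b"
  shows "balanced t N \<longleftrightarrow>
    liminf (\<lambda>n. ereal (real (N n) * minmesh (t n) (N n))) > 0 \<and>
    limsup (\<lambda>n. ereal (real (N n) * mesh (t n) (N n))) < \<infinity>"
  unfolding Liminf_ereal_gt_0_iff Limsup_ereal_less_PInfty_iff
proof safe
  assume "balanced t N"
  then obtain c where c: "0 < c"
    "\<And>n. 1 \<le> n \<Longrightarrow> real (N n) * mesh (t n) (N n) \<le> c * (b - a)"
    "\<And>n. 1 \<le> n \<Longrightarrow> (b - a) / c \<le> real (N n) * minmesh (t n) (N n)"
    using balanced_num_intervals_mult_mesh_bounds[OF _ assms] by metis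
  have "\<forall>\<^sub>F n in sequentially. (b - a) / c \<le> real (N n) * minmesh (t n) (N n)"
    by (rule eventually_sequentiallyI[of 1]) (rule c(3))
  moreover have "0 < (b - a) / c" using c(1) assms(2) by simp
  ultimately show "\<exists>d>0. \<forall>\<^sub>F n in sequentially. d \<le> real (N n) * minmesh (t n) (N n)"
    by blast
  have "\<forall>\<^sub>F n in sequentially. real (N n) * mesh (t n) (N n) \<le> c * (b - a)"
    by (rule eventually_sequentiallyI[of 1]) (rule c(2))
  then show "\<exists>B. \<forall>\<^sub>F n in sequentially. real (N n) * mesh (t n) (N n) \<le> B" by blast
qed (rule balanced_if_num_intervals_mult_mesh_bounded[OF assms])

lemma balanced_npoints_ratio_limsup_finite:
  assumes "partition_seq a b t N" "a < b" "balanced t N"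
    and "(\<lambda>n. mesh (t n) (N n)) \<longlonglongrightarrow> 0" "0 < h" "h \<le> b - a"
  shows "limsup (\<lambda>n. ereal ((SUP s\<in>{a..b-h}. real (npoints (t n) (N n) s (s + h)))
           / (INF s\<in>{a..b-h}. real (npoints (t n) (N n) s (s + h))))) < \<infinity>"
proof -
  obtain c where c: "0 < c" "\<And>n. 1 \<le> n \<Longrightarrow> mesh (t n) (N n) \<le> c * minmesh (t n) (N n)"
    using balancedE[OF assms(3,1,2)] by blast
  have "\<forall>\<^sub>F n in sequentially. mesh (t n) (N n) < h / 2"
    by (intro order_tendstoD(2)[OF assms(4)]) (use assms(5) in simp)
  then have "\<forall>\<^sub>F n in sequentially. (SUP s\<in>{a..b-h}. real (npoints (t n) (N n) s (s + h)))
      / (INF s\<in>{a..b-h}. real (npoints (t n) (N n) s (s + h))) \<le> 2 * c + 1"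
    using eventually_ge_at_top[of 1]
  proof eventually_elim
    case (elim n)
    have P: "is_partition a b (t n) (N n)" using partition_seqD[OF assms(1) elim(2)] .
    show ?case
      using npoints_ratio_le[OF P is_partition_num_intervals_pos[OF P assms(2)] assms(5,6)
          c(2)[OF elim(2)]] elim(1)
      by simp
  qed
  then show ?thesis unfolding Limsup_ereal_less_PInfty_iff by blast
qed

lemma ratios_comparable_if_products_between:
  fixes A c x y u v :: real
  assumes "0 < A" "0 < x" "0 < y" "A \<le> x * u" "x * u \<le> c * A" "A \<le> y * v" "y * v \<le> c * A"
  shows "u / v \<le> c * (y / x)" "y / x \<le> c * (u / v)"
proof -
  have cA: "0 \<le> c * A" using assms(1,4,5) by linarith
  have le: "u' / v' \<le> c * (y' / x')"
    if "0 < x'" "0 < y'" "x' * u' \<le> c * A" "A \<le> y' * v'" for x' y' u' v' :: real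
  proof -
    have "0 < v'" using that(2,4) assms(1) by (metis less_le_trans zero_less_mult_pos)
    then have "u' / v' = (x' * u') / (y' * v') * (y' / x')" using that(1,2) by (simp add: field_simps)
    also have "\<dots> \<le> (c * A) / A * (y' / x')"
      using that assms(1) cA by (intro mult_right_mono frac_le) auto
    finally show ?thesis using assms(1) by simp
  qed
  show "u / v \<le> c * (y / x)" using le assms by blast
  have "0 < u" "0 < v" using assms by (metis less_le_trans zero_less_mult_pos)+
  then show "y / x \<le> c * (u / v)" using le[of v u] assms by (simp add: mult.commute)
qed

lemma balanced_refinement_ratios_limsup_iff:
  assumes "partition_seq a b t N" "a < b" "balanced t N"
  shows "(limsup (\<lambda>n. ereal (real (N (Suc n)) / real (N n))) < \<infinity> \<longleftrightarrow>
          limsup (\<lambda>n. ereal (mesh (t n) (N n) / mesh (t (Suc n)) (N (Suc n)))) < \<infinity>) \<and>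
         (limsup (\<lambda>n. ereal (mesh (t n) (N n) / mesh (t (Suc n)) (N (Suc n)))) < \<infinity> \<longleftrightarrow>
          limsup (\<lambda>n. ereal (minmesh (t n) (N n) / minmesh (t (Suc n)) (N (Suc n)))) < \<infinity>)"
proof -
  obtain c where c: "0 < c"
    "\<And>n. 1 \<le> n \<Longrightarrow> b - a \<le> real (N n) * mesh (t n) (N n)"
    "\<And>n. 1 \<le> n \<Longrightarrow> real (N n) * mesh (t n) (N n) \<le> c * (b - a)"
    "\<And>n. 1 \<le> n \<Longrightarrow> (b - a) / c \<le> real (N n) * minmesh (t n) (N n)"
    "\<And>n. 1 \<le> n \<Longrightarrow> real (N n) * minmesh (t n) (N n) \<le> b - a"
    using balanced_num_intervals_mult_mesh_bounds[OF assms(3,1,2)] by blast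
  have N: "0 < real (N n)" if "1 \<le> n" for n
    using is_partition_num_intervals_pos[OF partition_seqD[OF assms(1) that] assms(2)] by simp
  have minmesh_upper: "real (N n) * minmesh (t n) (N n) \<le> c * ((b - a) / c)" if "1 \<le> n" for n
    using c(1) c(5)[OF that] by simp
  define count_ratio where "count_ratio n = real (N (Suc n)) / real (N n)" for n
  define mesh_ratio where "mesh_ratio n = mesh (t n) (N n) / mesh (t (Suc n)) (N (Suc n))" for n
  define minmesh_ratio where
    "minmesh_ratio n = minmesh (t n) (N n) / minmesh (t (Suc n)) (N (Suc n))" for n
  have "mesh_ratio n \<le> c * count_ratio n \<and> count_ratio n \<le> c * mesh_ratio n"
    if "1 \<le> n" for n
    using ratios_comparable_if_products_between[of "b - a" "real (N n)" "real (N (Suc n))"]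
      that N[of n] N[of "Suc n"] c(2,3)[of n] c(2,3)[of "Suc n"] assms(2)
    unfolding count_ratio_def mesh_ratio_def by simp
  then have "Limsup sequentially (\<lambda>n. ereal (mesh_ratio n)) < \<infinity> \<longleftrightarrow>
      Limsup sequentially (\<lambda>n. ereal (count_ratio n)) < \<infinity>"
    using c(1) by (intro Limsup_ereal_less_PInfty_iff_if_comparable eventually_sequentiallyI) auto
  moreover have "minmesh_ratio n \<le> c * count_ratio n \<and> count_ratio n \<le> c * minmesh_ratio n"
    if "1 \<le> n" for n
    using ratios_comparable_if_products_between[of "(b - a) / c" "real (N n)" "real (N (Suc n))"]
      that N[of n] N[of "Suc n"] c(4)[of n] c(4)[of "Suc n"]
      minmesh_upper[of n] minmesh_upper[of "Suc n"] assms(2) c(1)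
    unfolding count_ratio_def minmesh_ratio_def by simp
  then have "Limsup sequentially (\<lambda>n. ereal (minmesh_ratio n)) < \<infinity> \<longleftrightarrow>
      Limsup sequentially (\<lambda>n. ereal (count_ratio n)) < \<infinity>"
    using c(1) by (intro Limsup_ereal_less_PInfty_iff_if_comparable eventually_sequentiallyI) auto
  ultimately show ?thesis unfolding count_ratio_def mesh_ratio_def minmesh_ratio_def by blast
qed

lemma continuous_mono_on_image_atLeastAtMost:
  fixes g :: "real \<Rightarrow> real"
  assumes "a \<le> b" "continuous_on {a..b} g" "mono_on {a..b} g"
  shows "g ` {a..b} = {g a..g b}"
proof
  show "g ` {a..b} \<subseteq> {g a..g b}"
    using assms(1) by (auto intro!: mono_onD[OF assms(3)])
  show "{g a..g b} \<subseteq> g ` {a..b}"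
  proof
    fix y assume "y \<in> {g a..g b}"
    then obtain x where "a \<le> x" "x \<le> b" "g x = y" using IVT'[of g a y b] assms(1,2) by auto
    then show "y \<in> g ` {a..b}" by auto
  qed
qed

lemma diff_between_if_derivative_between:
  fixes g g' :: "real \<Rightarrow> real"
  assumes "x \<le> y"
    and "\<And>z. z \<in> {x..y} \<Longrightarrow> (g has_real_derivative g' z) (at z within {x..y})"
    and "\<And>z. z \<in> {x..y} \<Longrightarrow> lo \<le> g' z \<and> g' z \<le> hi"
  shows "lo * (y - x) \<le> g y - g x \<and> g y - g x \<le> hi * (y - x)"
proof (cases "x = y")
  case False
  then have "x < y" using assms(1) by simp
  then obtain z where z: "z \<in> {x<..<y}" "g y - g x = g' z * (y - x)"
    using mvt_simple[of x y g "\<lambda>z d. g' z * d"] assms(2)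
    by (auto simp: has_real_derivative_iff_has_vector_derivative has_vector_derivative_def
        mult.commute)
  have "lo * (y - x) \<le> g' z * (y - x)" "g' z * (y - x) \<le> hi * (y - x)"
    using assms(3)[of z] z(1) \<open>x < y\<close> by (auto intro: mult_right_mono)
  then show ?thesis using z(2) by simp
qed simp

lemma is_partition_image:
  assumes "is_partition a b t N" "strict_mono_on {a..b} g"
  shows "is_partition (g a) (g b) (\<lambda>i. g (t i)) N"
  using assms strict_mono_onD[OF assms(2)] is_partition_range[OF assms(1)]
  unfolding is_partition_def by (simp add: Suc_leI less_imp_le)

lemma mesh_le_mult_if_gaps_le:
  assumes "0 < N" "0 \<le> hi" "\<And>i. i < N \<Longrightarrow> u (Suc i) - u i \<le> hi * (t (Suc i) - t i)"
  shows "mesh u N \<le> hi * mesh t N"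
proof -
  obtain i where "i < N" "mesh u N = u (Suc i) - u i" using mesh_attained[OF assms(1)] by blast
  moreover have "hi * (t (Suc i) - t i) \<le> hi * mesh t N"
    using gap_le_mesh[OF \<open>i < N\<close>] assms(2) by (rule mult_left_mono)
  ultimately show ?thesis using assms(3) by (metis order_trans)
qed

lemma minmesh_ge_mult_if_gaps_ge:
  assumes "0 < N" "0 \<le> lo" "\<And>i. i < N \<Longrightarrow> lo * (t (Suc i) - t i) \<le> u (Suc i) - u i"
  shows "lo * minmesh t N \<le> minmesh u N"
proof -
  obtain i where "i < N" "minmesh u N = u (Suc i) - u i" using minmesh_attained[OF assms(1)] by blast
  moreover have "lo * minmesh t N \<le> lo * (t (Suc i) - t i)"
    using minmesh_le_gap[OF \<open>i < N\<close>] assms(2) by (rule mult_left_mono)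
  ultimately show ?thesis using assms(3) by (metis order_trans)
qed

lemma balanced_image_if_bilipschitz:
  assumes "partition_seq a b s M" "a < b" "balanced s M" "0 < lo"
    and "\<And>x y. a \<le> x \<Longrightarrow> x \<le> y \<Longrightarrow> y \<le> b \<Longrightarrow>
      lo * (y - x) \<le> g y - g x \<and> g y - g x \<le> hi * (y - x)"
  shows "balanced (\<lambda>n i. g (s n i)) M"
proof -
  obtain c where c: "0 < c" "\<And>n. 1 \<le> n \<Longrightarrow> mesh (s n) (M n) \<le> c * minmesh (s n) (M n)"
    using balancedE[OF assms(3,1,2)] by blast
  from assms(5)[of a b] assms(2)
  have "lo * (b - a) \<le> g b - g a" "g b - g a \<le> hi * (b - a)" by auto
  then have "lo * (b - a) \<le> hi * (b - a)" by (rule order_trans)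
  then have hi: "lo \<le> hi" using mult_le_cancel_right_pos[of "b - a" lo hi] assms(2) by simp
  have "mesh (\<lambda>i. g (s n i)) (M n) / minmesh (\<lambda>i. g (s n i)) (M n) \<le> hi * c / lo"
    if "1 \<le> n" for n
  proof -
    have P: "is_partition a b (s n) (M n)" using partition_seqD[OF assms(1) that] .
    have M: "0 < M n" using is_partition_num_intervals_pos[OF P assms(2)] .
    have gaps: "lo * (s n (Suc i) - s n i) \<le> g (s n (Suc i)) - g (s n i) \<and>
        g (s n (Suc i)) - g (s n i) \<le> hi * (s n (Suc i) - s n i)" if "i < M n" for i
      using assms(5) is_partition_range[OF P] is_partition_mono[OF P, of i "Suc i"] that by simp
    have m: "0 < minmesh (s n) (M n)" using minmesh_pos[OF P M] .
    have "mesh (\<lambda>i. g (s n i)) (M n) / minmesh (\<lambda>i. g (s n i)) (M n)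
        \<le> (hi * mesh (s n) (M n)) / (lo * minmesh (s n) (M n))"
      using mesh_le_mult_if_gaps_le[OF M] minmesh_ge_mult_if_gaps_ge[OF M] gaps assms(4) hi m
        mesh_pos[OF P M]
      by (intro frac_le) auto
    also have "\<dots> = (hi / lo) * (mesh (s n) (M n) / minmesh (s n) (M n))" by simp
    also have "\<dots> \<le> (hi / lo) * c"
      using c(2)[OF that] m assms(4) hi by (intro mult_left_mono) (auto simp: pos_divide_le_eq)
    finally show ?thesis by simp
  qed
  moreover have "0 < hi * c / lo" using assms(4) hi c(1) by simp
  ultimately show ?thesis unfolding balanced_def by blast
qed

lemma balanced_image_if_derivative_pos:
  fixes g g' :: "real \<Rightarrow> real"
  assumes "a < b"
    and "\<forall>x\<in>{a..b}. (g has_real_derivative g' x) (at x within {a..b})"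
    and "continuous_on {a..b} g'" "strict_mono_on {a..b} g" "(INF x\<in>{a..b}. g' x) > 0"
    and "partition_seq a b s M" "balanced s M"
  shows "g ` {a..b} = {g a..g b} \<and> partition_seq (g a) (g b) (\<lambda>n i. g (s n i)) M \<and>
    balanced (\<lambda>n i. g (s n i)) M"
proof (intro conjI)
  have "continuous_on {a..b} g" using assms(2) by (intro DERIV_continuous_on) auto
  then show "g ` {a..b} = {g a..g b}"
    using assms(1,4) by (intro continuous_mono_on_image_atLeastAtMost strict_mono_on_imp_mono_on) auto
  show "partition_seq (g a) (g b) (\<lambda>n i. g (s n i)) M"
    using assms(6) is_partition_image[OF _ assms(4)] unfolding partition_seq_def by blast
  have "bounded (g' ` {a..b})"
    using assms(3) by (intro compact_imp_bounded compact_continuous_image) auto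
  define lo where "lo = (INF x\<in>{a..b}. g' x)"
  define hi where "hi = (SUP x\<in>{a..b}. g' x)"
  have lo: "\<And>x. x \<in> {a..b} \<Longrightarrow> lo \<le> g' x"
    unfolding lo_def using \<open>bounded (g' ` {a..b})\<close> by (intro cINF_lower bounded_imp_bdd_below)
  have hi: "\<And>x. x \<in> {a..b} \<Longrightarrow> g' x \<le> hi"
    unfolding hi_def using \<open>bounded (g' ` {a..b})\<close> by (intro cSUP_upper bounded_imp_bdd_above)
  have "lo * (y - x) \<le> g y - g x \<and> g y - g x \<le> hi * (y - x)"
    if "a \<le> x" "x \<le> y" "y \<le> b" for x y
  proof (rule diff_between_if_derivative_between[OF that(2)])
    fix z assume "z \<in> {x..y}"
    then have z: "z \<in> {a..b}" using that by simp
    have "{x..y} \<subseteq> {a..b}" using that by simp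
    with assms(2) z show "(g has_real_derivative g' z) (at z within {x..y})"
      using DERIV_subset by blast
    show "lo \<le> g' z \<and> g' z \<le> hi" using lo[OF z] hi[OF z] by simp
  qed
  moreover have "0 < lo" using assms(5) unfolding lo_def .
  ultimately show "balanced (\<lambda>n i. g (s n i)) M"
    by (intro balanced_image_if_bilipschitz[OF assms(6,1,7)])
qed

theorem proposition2p2:
  fixes T :: real and t :: "nat \<Rightarrow> nat \<Rightarrow> real" and N :: "nat \<Rightarrow> nat"
  assumes T: "T > 0"
    and part: "partition_seq 0 T t N"
    and vanish: "(\<lambda>n. mesh (t n) (N n)) \<longlonglongrightarrow> 0"
  shows
    "(balanced t N \<longleftrightarrow>
        liminf (\<lambda>n. ereal (real (N n) * minmesh (t n) (N n))) > 0 \<and>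
        limsup (\<lambda>n. ereal (real (N n) * mesh (t n) (N n))) < \<infinity>)
     \<and> (balanced t N \<longrightarrow> (\<forall>h. 0 < h \<and> h \<le> T \<longrightarrow>
        limsup (\<lambda>n. ereal ((SUP s\<in>{0..T-h}. real (npoints (t n) (N n) s (s+h)))
                          / (INF s\<in>{0..T-h}. real (npoints (t n) (N n) s (s+h))))) < \<infinity>))
     \<and> (balanced t N \<longrightarrow>
        ((limsup (\<lambda>n. ereal (real (N (Suc n)) / real (N n))) < \<infinity> \<longleftrightarrow>
          limsup (\<lambda>n. ereal (mesh (t n) (N n) / mesh (t (Suc n)) (N (Suc n)))) < \<infinity>) \<and>
         (limsup (\<lambda>n. ereal (mesh (t n) (N n) / mesh (t (Suc n)) (N (Suc n)))) < \<infinity> \<longleftrightarrow>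
          limsup (\<lambda>n. ereal (minmesh (t n) (N n) / minmesh (t (Suc n)) (N (Suc n)))) < \<infinity>)))
     \<and> (\<forall>(g::real \<Rightarrow> real) g'. 
          (\<forall>x\<in>{0..T}. (g has_real_derivative g' x) (at x within {0..T})) \<and>
          continuous_on {0..T} g' \<and> strict_mono_on {0..T} g \<and>
          (INF x\<in>{0..T}. g' x) > 0 \<longrightarrow>
          (\<forall>(s :: nat \<Rightarrow> nat \<Rightarrow> real) M. partition_seq 0 T s M \<and> balanced s M \<longrightarrow>
             g ` {0..T} = {g 0..g T} \<and>
             partition_seq (g 0) (g T) (\<lambda>n i. g (s n i)) M \<and>
             balanced (\<lambda>n i. g (s n i)) M))"
proof -
  note balanced_iff_num_intervals_mult_mesh_bounded[OF part T]
  moreover note balanced_npoints_ratio_limsup_finite[OF part T _ vanish, unfolded diff_zero]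
  moreover note balanced_refinement_ratios_limsup_iff[OF part T]
  moreover note balanced_image_if_derivative_pos[OF T]
  ultimately show ?thesis by blast
qed

end
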